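(* Let $q>1$ and $m,n\in\mathbb{N}$. Then $U_{n,q}(e_m;z)$ is a polynomial in $z$ of degree at most $\min(m,n)$, and \[U_{n,q}(e_m;z)=\frac{[n-1]_q!}{[n+m-1]_q!}\sum_{s=1}^m S_q(m,s)\,[n]_q^s\,B_{n,q}(e_s;z).\]
   Context: For an integer $n\ge 0$ and $p>0$: $[n]_p=1+p+\dots+p^{n-1}$ ($[0]_p=0$), $[n]_p!=[1]_p\cdots[n]_p$ ($[0]_p!=1$), $\left[\begin{smallmatrix}n\\k\end{smallmatrix}\right]_p=\frac{[n]_p!}{[k]_p![n-k]_p!}$. For $z\in\mathbb{C}$, $(1-z)_p^n=\prod_{s=0}^{n-1}(1-p^s z)$ and $p_{n,k}(p;z)=\left[\begin{smallmatrix}n\\k\end{smallmatrix}\right]_p z^k(1-z)_p^{n-k}$. For $0<p<1$, $\int_0^1 g(t)\,d_pt=(1-p)\sum_{j=0}^\infty g(p^j)p^j$. For $q>1$, $n\in\mathbb{N}$ and $f:[0,1]\to\mathbb{C}$, \[U_{n,q}(f;z)=f(0)p_{n,0}(q;z)+f(1)p_{n,n}(q;z)+[n-1]_{q^{-1}}\sum_{k=1}^{n-1}q^{k-1}p_{n,k}(q;z)\int_0^1 p_{n-2,k-1}(q^{-1};q^{-1}t)\,f(q^{k-n}t)\,d_{q^{-1}}t\] (sum empty for $n=1$). $e_m(t)=t^m$. The numbers $S_q(m,s)$ are defined by the polynomial identity $\prod_{s=0}^{m-1}(q^sx+[s]_q)=\sum_{s=1}^m S_q(m,s)x^s$ in the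 variable $x$ (so that $[k]_q[k+1]_q\cdots[k+m-1]_q=\sum_{s=1}^mS_q(m,s)[k]_q^s$). $B_{n,q}(e_s;z)=\sum_{k=0}^n\left(\frac{[k]_q}{[n]_q}\right)^s p_{n,k}(q;z)$ is the $q$-Bernstein polynomial of $e_s$. *)

theory Defs
  imports "HOL-Analysis.Analysis" "HOL-Computational_Algebra.Polynomial"
begin

definition qint :: "real \<Rightarrow> nat \<Rightarrow> real" where
  "qint p n = (\<Sum>i<n. p ^ i)"

definition qfact :: "real \<Rightarrow> nat \<Rightarrow> real" where
  "qfact p n = (\<Prod>k=1..n. qint p k)"

text \<open>q-binomial coefficient (used for k \<le> n)\<close>
definition qbinom :: "real \<Rightarrow> nat \<Rightarrow> nat \<Rightarrow> real" where
  "qbinom p n k = qfact p n / (qfact p k * qfact p (n - k))"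

definition qpoch :: "real \<Rightarrow> nat \<Rightarrow> complex \<Rightarrow> complex" where
  "qpoch p n z = (\<Prod>s<n. 1 - of_real (p ^ s) * z)"

definition pnk :: "real \<Rightarrow> nat \<Rightarrow> nat \<Rightarrow> complex \<Rightarrow> complex" where
  "pnk p n k z = of_real (qbinom p n k) * z ^ k * qpoch p (n - k) z"

text \<open>Jackson q-integral on [0,1], for 0<p<1\<close>
definition qintegral :: "real \<Rightarrow> (real \<Rightarrow> complex) \<Rightarrow> complex" where
  "qintegral p g = of_real (1 - p) * (\<Sum>j. g (p ^ j) * of_real (p ^ j))"

definition Uop :: "real \<Rightarrow> nat \<Rightarrow> (real \<Rightarrow> complex) \<Rightarrow> complex \<Rightarrow> complex" where
  "Uop q n f z =
     f 0 * pnk q n 0 z + f 1 * pnk q n n z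
     + of_real (qint (1/q) (n - 1)) *
       (\<Sum>k=1..n-1. of_real (q ^ (k - 1)) * pnk q n k z *
          qintegral (1/q) (\<lambda>t. pnk (1/q) (n - 2) (k - 1) (of_real (t / q)) *
                                 f (q powi (int k - int n) * t)))"

definition emon :: "nat \<Rightarrow> real \<Rightarrow> complex" where
  "emon m t = complex_of_real (t ^ m)"

definition Sq :: "real \<Rightarrow> nat \<Rightarrow> nat \<Rightarrow> real" where
  "Sq q m s = coeff (\<Prod>i<m. [: qint q i, q ^ i :]) s"

definition Bq_e :: "real \<Rightarrow> nat \<Rightarrow> nat \<Rightarrow> complex \<Rightarrow> complex" where
  "Bq_e q n s z = (\<Sum>k=0..n. of_real ((qint q k / qint q n) ^ s) * pnk q n k z)"

end

theory Submission
  imports Defs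
begin

text \<open>With \<open>p = 1/q\<close>, each Jackson integral in \<open>U\<^sub>n\<^sub>,\<^sub>q(e\<^sub>m)\<close> is a q-beta integral
  \<open>\<integral>\<^sub>0\<^sup>1 t\<^sup>a (pt;p)\<^sub>b d\<^sub>pt = [a]\<^sub>p! [b]\<^sub>p! / [a+b+1]\<^sub>p!\<close>, evaluated by q-integration by parts.
  It turns the \<open>k\<close>-th coefficient of \<open>U\<^sub>n\<^sub>,\<^sub>q(e\<^sub>m)\<close> into
  \<open>[k]\<^sub>q\<cdots>[k+m-1]\<^sub>q / [n]\<^sub>q\<cdots>[n+m-1]\<^sub>q\<close>, and expanding the numerator in powers of \<open>[k]\<^sub>q\<close>
  gives the Bernstein form. For the degree, the numerator is a polynomial of degree \<open>m\<close> in
  \<open>q\<^sup>k\<close>, while \<open>\<Sum>\<^sub>k x\<^sup>k p\<^sub>n\<^sub>,\<^sub>k(z) = \<Sum>\<^sub>r [n,r]\<^sub>q (x-1)(x-q)\<cdots>(x-q\<^sup>r\<^sup>-\<^sup>1) z\<^sup>r\<close>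
  has degree at most \<open>s\<close> at \<open>x = q\<^sup>s\<close>.\<close>

section \<open>q-integers and q-rising products\<close>

lemma qint_0 [simp]: "qint p 0 = 0"
  by (simp add: qint_def)

lemma qint_Suc: "qint p (Suc n) = qint p n + p ^ n"
  by (simp add: qint_def)

lemma qint_closed: "p \<noteq> 1 \<Longrightarrow> qint p n = (1 - p ^ n) / (1 - p)"
  unfolding qint_def by (simp add: sum_gp_strict)

lemma qint_pos: "p > 0 \<Longrightarrow> n \<ge> 1 \<Longrightarrow> qint p n > 0"
  unfolding qint_def by (intro sum_pos) (auto simp: lessThan_empty_iff)

lemma qint_add: "qint p (k + i) = qint p i + p ^ i * qint p k"
  by (induction k) (simp_all add: qint_Suc algebra_simps power_add)

lemma qint_inverse_base:
  assumes "p \<noteq> 0" shows "qint p (Suc n) = p ^ n * qint (1 / p) (Suc n)"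
proof -
  have "qint p (Suc n) = (\<Sum>i<Suc n. p ^ (n - i))"
    unfolding qint_def using sum.nat_diff_reindex[of "\<lambda>i. p ^ i" "Suc n"] by simp
  also have "\<dots> = (\<Sum>i<Suc n. p ^ n * (1 / p) ^ i)"
    using assms by (intro sum.cong refl) (simp add: power_diff power_one_over)
  finally show ?thesis by (simp add: qint_def sum_distrib_left del: sum.lessThan_Suc)
qed

lemma qfact_0 [simp]: "qfact p 0 = 1"
  by (simp add: qfact_def)

lemma qfact_Suc: "qfact p (Suc n) = qfact p n * qint p (Suc n)"
  by (simp add: qfact_def)

lemma qfact_pos: "p > 0 \<Longrightarrow> qfact p n > 0"
  unfolding qfact_def by (intro prod_pos) (auto intro: qint_pos)

lemma degree_prod_linear_le: "degree (\<Prod>i<m. [: a i, b i :]) \<le> m"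
proof -
  have "degree (\<Prod>i<m. [: a i, b i :]) \<le> (\<Sum>i<m. degree [: a i, b i :])"
    using degree_prod_sum_le[of "{..<m}" "\<lambda>i. [: a i, b i :]"] by (simp add: o_def)
  also have "\<dots> \<le> (\<Sum>i<m. 1)"
    by (intro sum_mono) (simp add: degree_pCons_le)
  finally show ?thesis by simp
qed

lemma poly_eq_sum_coeff_le:
  fixes x :: "'a::{comm_semiring_0,semiring_1}"
  assumes "degree P \<le> n"
  shows "poly P x = (\<Sum>i\<le>n. coeff P i * x ^ i)"
  unfolding poly_altdef using assms
  by (intro sum.mono_neutral_left) (auto simp: coeff_eq_0)

definition qrising :: "real \<Rightarrow> nat \<Rightarrow> nat \<Rightarrow> real" where
  "qrising p k m = (\<Prod>i<m. qint p (k + i))"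

lemma qrising_0_left: "m \<ge> 1 \<Longrightarrow> qrising p 0 m = 0"
  unfolding qrising_def by (rule prod_zero) (auto intro!: bexI[of _ 0])

lemma qfact_add: "qfact p (k + m) = qfact p k * qrising p (Suc k) m"
  by (induction m) (simp_all add: qrising_def qfact_Suc)

lemma qrising_inverse_base:
  assumes "p \<noteq> 0"
  shows "qrising p (Suc k) m = p ^ (k * m + (\<Sum>i<m. i)) * qrising (1 / p) (Suc k) m"
proof -
  have "qrising p (Suc k) m = (\<Prod>i<m. p ^ (k + i) * qint (1 / p) (Suc (k + i)))"
    unfolding qrising_def using qint_inverse_base[OF assms] by simp
  also have "\<dots> = p ^ (\<Sum>i<m. k + i) * qrising (1 / p) (Suc k) m"
    by (simp add: prod.distrib power_sum qrising_def)
  finally show ?thesis by (simp add: sum.distrib mult.commute)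
qed

lemma qrising_eq_sum_Sq: "qrising q k m = (\<Sum>s\<le>m. Sq q m s * qint q k ^ s)"
proof -
  have "qrising q k m = poly (\<Prod>i<m. [: qint q i, q ^ i :]) (qint q k)"
    unfolding qrising_def poly_prod qint_add by (simp add: mult.commute)
  then show ?thesis
    unfolding Sq_def by (simp add: poly_eq_sum_coeff_le degree_prod_linear_le)
qed

lemma qint_add_closed:
  assumes "q \<noteq> 1"
  shows "qint q (k + i) = - 1 / (q - 1) + q ^ k * (q ^ i / (q - 1))"
proof -
  have "qint q (k + i) = (q ^ k * q ^ i - 1) / (q - 1)"
    using qint_closed[OF assms, of "k + i"] by (metis minus_diff_eq minus_divide_divide power_add)
  then show ?thesis by (simp add: diff_divide_distrib)
qed

lemma qrising_eq_poly_qpower: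
  assumes "q \<noteq> 1"
  shows "qrising q k m = poly (\<Prod>i<m. [: - 1 / (q - 1), q ^ i / (q - 1) :]) (q ^ k)"
  unfolding qrising_def poly_prod qint_add_closed[OF assms] by simp

lemma qrising_eq_sum_qpower:
  assumes "q \<noteq> 1"
  shows "qrising q k m = (\<Sum>s\<le>m. coeff (\<Prod>i<m. [: - 1 / (q - 1), q ^ i / (q - 1) :]) s * (q ^ s) ^ k)"
  unfolding qrising_eq_poly_qpower[OF assms] poly_eq_sum_coeff_le[OF degree_prod_linear_le]
  by (simp add: mult.commute flip: power_mult)

section \<open>The q-beta integral\<close>

text \<open>\<open>qbeta_term p a b j\<close> is \<open>t\<^sup>a (pt;p)\<^sub>b \<cdot> t\<close> at the node \<open>t = p\<^sup>j\<close> of the Jackson integral.\<close>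
definition qbeta_term :: "real \<Rightarrow> nat \<Rightarrow> nat \<Rightarrow> nat \<Rightarrow> real" where
  "qbeta_term p a b j = (p ^ Suc a) ^ j * (\<Prod>s<b. 1 - p ^ (s + 1 + j))"

lemma abs_prod_one_minus_powers_le:
  fixes p :: real assumes "0 < p" "p < 1"
  shows "\<bar>\<Prod>s\<in>S. 1 - p ^ f s\<bar> \<le> 1"
  using assms by (auto simp: abs_prod power_le_one intro!: prod_le_1)

lemma summable_power_Suc_geometric:
  fixes p :: real assumes "0 < p" "p < 1"
  shows "summable (\<lambda>j. (p ^ Suc a) ^ j)"
  using assms power_Suc_less_one[of p a] by (intro summable_geometric) simp

lemma qbeta_term_summable:
  assumes "0 < p" "p < 1"
  shows "summable (qbeta_term p a b)"
proof (rule summable_comparison_test'[OF summable_power_Suc_geometric[OF assms, of a]])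
  fix j
  show "norm (qbeta_term p a b j) \<le> (p ^ Suc a) ^ j"
    using abs_prod_one_minus_powers_le[OF assms, of "\<lambda>s. s + 1 + j" "{..<b}"] assms
    by (simp add: qbeta_term_def abs_mult mult_left_le)
qed

lemma qbeta_term_Suc_right:
  "qbeta_term p a (Suc b) j = qbeta_term p a b j - p ^ Suc b * qbeta_term p (Suc a) b j"
  unfolding qbeta_term_def by (simp add: algebra_simps power_add power_mult_distrib)

lemma qbeta_term_Suc_left:
  assumes "0 < p" "p < 1"
  shows "(1 - p ^ Suc a) * suminf (qbeta_term p a b)
       = (1 - p ^ (a + b + 2)) * suminf (qbeta_term p (Suc a) b)"
proof -
  \<comment> \<open>q-integration by parts: \<open>H\<close> is \<open>t\<^sup>a\<^sup>+\<^sup>1 (t;p)\<^sub>b\<^sub>+\<^sub>1\<close> at \<open>t = p\<^sup>j\<close>; its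
     q-differences sum to \<open>H 0 = 0\<close>.\<close>
  define H where "H j = (p ^ Suc a) ^ j * (\<Prod>s<Suc b. 1 - p ^ (s + j))" for j
  have H_diff: "H j - H (Suc j) = (1 - p ^ Suc a) * qbeta_term p a b j
                                 - (1 - p ^ (a + b + 2)) * qbeta_term p (Suc a) b j" for j
  proof -
    define P where "P = (\<Prod>s<b. 1 - p ^ (s + 1 + j))"
    have shift_low: "(\<Prod>s<Suc b. 1 - p ^ (s + j)) = (1 - p ^ j) * P"
      unfolding P_def by (subst prod.lessThan_Suc_shift) simp
    have shift_high: "(\<Prod>s<Suc b. 1 - p ^ (s + Suc j)) = P * (1 - p ^ (b + 1 + j))"
      unfolding P_def by simp
    show ?thesis
      unfolding H_def qbeta_term_def shift_low shift_high P_def[symmetric]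
      by (simp add: algebra_simps power_add power_mult_distrib)
  qed
  have "H \<longlonglongrightarrow> 0"
  proof (rule Lim_null_comparison)
    show "(\<lambda>j. (p ^ Suc a) ^ j) \<longlonglongrightarrow> 0"
      by (rule summable_LIMSEQ_zero[OF summable_power_Suc_geometric[OF assms]])
    show "\<forall>\<^sub>F j in sequentially. norm (H j) \<le> (p ^ Suc a) ^ j"
    proof (intro always_eventually allI)
      fix j
      show "norm (H j) \<le> (p ^ Suc a) ^ j"
        using abs_prod_one_minus_powers_le[OF assms, of "\<lambda>s. s + j" "{..<Suc b}"] assms
        by (simp add: H_def abs_mult mult_left_le del: prod.lessThan_Suc)
    qed
  qed
  moreover have "H 0 = 0"
    unfolding H_def prod.lessThan_Suc_shift by simp
  ultimately have "(\<lambda>j. H j - H (Suc j)) sums 0"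
    using telescope_sums'[of H 0] by simp
  moreover have "(\<lambda>j. H j - H (Suc j)) sums
      ((1 - p ^ Suc a) * suminf (qbeta_term p a b) - (1 - p ^ (a + b + 2)) * suminf (qbeta_term p (Suc a) b))"
    unfolding H_diff by (intro sums_diff sums_mult summable_sums qbeta_term_summable assms)
  ultimately show ?thesis
    using sums_unique2 by fastforce
qed

lemma suminf_qbeta_term_0:
  assumes "0 < p" "p < 1"
  shows "suminf (qbeta_term p a 0) = 1 / (1 - p ^ Suc a)"
proof -
  have "qbeta_term p a 0 = (\<lambda>j. (p ^ Suc a) ^ j)"
    by (simp add: fun_eq_iff qbeta_term_def)
  then show ?thesis
    using suminf_geometric[of "p ^ Suc a"] power_Suc_less_one[OF assms, of a] assms by simp
qed

lemma suminf_qbeta_term_Suc_right: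
  assumes "0 < p" "p < 1"
  shows "suminf (qbeta_term p a (Suc b))
       = suminf (qbeta_term p a b) - p ^ Suc b * suminf (qbeta_term p (Suc a) b)"
proof -
  have "qbeta_term p a (Suc b) = (\<lambda>j. qbeta_term p a b j - p ^ Suc b * qbeta_term p (Suc a) b j)"
    by (simp add: fun_eq_iff qbeta_term_Suc_right)
  then have "qbeta_term p a (Suc b) sums
      (suminf (qbeta_term p a b) - p ^ Suc b * suminf (qbeta_term p (Suc a) b))"
    by (simp only:) (intro sums_diff sums_mult summable_sums qbeta_term_summable assms)
  then show ?thesis
    by (rule sums_unique[symmetric])
qed

lemma qbeta_term_sums:
  assumes "0 < p" "p < 1"
  shows "qbeta_term p a b sums (qfact p a * qfact p b / ((1 - p) * qfact p (a + b + 1)))"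
proof -
  have ne: "1 - p ^ Suc k \<noteq> 0" for k
    using power_Suc_less_one[OF assms, of k] by simp
  have "(1 - p) * suminf (qbeta_term p a b) = qfact p a * qfact p b / qfact p (a + b + 1)"
  proof (induction b arbitrary: a)
    case 0
    have "qfact p a * qfact p 0 / qfact p (a + 0 + 1) = 1 / qint p (Suc a)"
      using qfact_pos[of p a] assms by (simp add: qfact_Suc)
    then show ?case
      using assms by (simp add: suminf_qbeta_term_0 qint_closed)
  next
    case (Suc b)
    have shift_a: "suminf (qbeta_term p (Suc a) b)
        = (1 - p ^ Suc a) / (1 - p ^ (a + b + 2)) * suminf (qbeta_term p a b)"
      using qbeta_term_Suc_left[OF assms, of a b] ne[of "a + b + 1"] by (simp add: field_simps)
    have "(1 - p) * suminf (qbeta_term p a (Suc b))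
        = (1 - p) * suminf (qbeta_term p a b) * ((1 - p ^ Suc b) / (1 - p ^ (a + b + 2)))"
      unfolding suminf_qbeta_term_Suc_right[OF assms] shift_a using ne[of "a + b + 1"]
      by (simp add: field_simps power_add)
    also have "(1 - p ^ Suc b) / (1 - p ^ (a + b + 2)) = qint p (Suc b) / qint p (a + Suc b + 1)"
      using assms by (simp add: qint_closed)
    finally show ?case
      unfolding Suc.IH using qfact_pos[of p] assms by (simp add: qfact_Suc field_simps)
  qed
  then have "suminf (qbeta_term p a b) = qfact p a * qfact p b / ((1 - p) * qfact p (a + b + 1))"
    using assms qfact_pos[of p "a + b + 1"] by (simp add: field_simps)
  then show ?thesis
    using summable_sums[OF qbeta_term_summable[OF assms]] by metis
qed

lemma qintegral_power_qpoch:
  assumes "0 < p" "p < 1"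
  shows "qintegral p (\<lambda>t. of_real (c * t ^ a) * qpoch p b (of_real (p * t)))
       = of_real (c * qfact p a * qfact p b / qfact p (a + b + 1))"
proof -
  have "(\<lambda>j. of_real (c * (p ^ j) ^ a) * qpoch p b (of_real (p * p ^ j)) * of_real (p ^ j))
      = (\<lambda>j. of_real (c * qbeta_term p a b j))"
  proof
    fix j
    have "qpoch p b (of_real (p * p ^ j)) = of_real (\<Prod>s<b. 1 - p ^ (s + 1 + j))"
      unfolding qpoch_def by (simp add: power_add mult_ac)
    moreover have "c * (p ^ j) ^ a * (\<Prod>s<b. 1 - p ^ (s + 1 + j)) * p ^ j = c * qbeta_term p a b j"
      by (simp add: qbeta_term_def power_mult_distrib mult_ac flip: power_mult)
    ultimately show "of_real (c * (p ^ j) ^ a) * qpoch p b (of_real (p * p ^ j)) * of_real (p ^ j)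
        = (of_real (c * qbeta_term p a b j) :: complex)"
      by (metis of_real_mult)
  qed
  moreover have "(\<lambda>j. of_real (c * qbeta_term p a b j)) sums
      (of_real (c * (qfact p a * qfact p b / ((1 - p) * qfact p (a + b + 1)))) :: complex)"
    by (intro sums_of_real sums_mult qbeta_term_sums assms)
  ultimately have "qintegral p (\<lambda>t. of_real (c * t ^ a) * qpoch p b (of_real (p * t)))
      = of_real (1 - p) * of_real (c * (qfact p a * qfact p b / ((1 - p) * qfact p (a + b + 1))))"
    unfolding qintegral_def by (simp add: sums_unique[symmetric] del: of_real_mult)
  also have "\<dots> = of_real (c * qfact p a * qfact p b / qfact p (a + b + 1))"
  proof -
    have "(1 - p) * (c * (qfact p a * qfact p b / ((1 - p) * qfact p (a + b + 1))))
        = c * qfact p a * qfact p b / qfact p (a + b + 1)"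
      using assms qfact_pos[of p "a + b + 1"] by (simp add: field_simps)
    then show ?thesis by (simp only: of_real_mult[symmetric])
  qed
  finally show ?thesis .
qed

section \<open>The q-Bernstein basis\<close>

lemma qbinom_0 [simp]: "q > 0 \<Longrightarrow> qbinom q n 0 = 1"
  unfolding qbinom_def using qfact_pos[of q n] by simp

lemma qbinom_self [simp]: "q > 0 \<Longrightarrow> qbinom q n n = 1"
  unfolding qbinom_def using qfact_pos[of q n] by simp

lemma qbinom_pascal:
  assumes q: "q > 0" and "i < n"
  shows "qbinom q (Suc n) (Suc i) = qbinom q n i + q ^ Suc i * qbinom q n (Suc i)"
proof -
  obtain d where d: "n = Suc (i + d)" using less_imp_Suc_add[OF \<open>i < n\<close>] ..
  have "qint q (Suc n) = qint q (Suc i) + q ^ Suc i * qint q (Suc d)"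
    using qint_add[of q "Suc d" "Suc i"] d by (simp add: ac_simps)
  then show ?thesis
    unfolding qbinom_def d
    using qfact_pos[OF q, of d] qfact_pos[OF q, of i] qint_pos[OF q, of "Suc i"] qint_pos[OF q, of "Suc d"]
    by (simp add: field_simps qfact_Suc)
qed

lemma qpoch_Suc: "qpoch q (Suc j) z = (1 - z) * qpoch q j (of_real q * z)"
  unfolding qpoch_def prod.lessThan_Suc_shift by (simp add: mult_ac)

lemma pnk_Suc_0: "q > 0 \<Longrightarrow> pnk q (Suc n) 0 z = (1 - z) * pnk q n 0 (of_real q * z)"
  by (simp add: pnk_def qpoch_Suc)

lemma pnk_Suc_self: "q > 0 \<Longrightarrow> pnk q (Suc n) (Suc n) z = z * pnk q n n z"
  by (simp add: pnk_def qpoch_def)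

lemma pnk_Suc_Suc:
  assumes "q > 0" "i < n"
  shows "pnk q (Suc n) (Suc i) z = z * pnk q n i z + (1 - z) * pnk q n (Suc i) (of_real q * z)"
proof -
  have split: "qpoch q (n - i) z = (1 - z) * qpoch q (n - Suc i) (of_real q * z)"
    using assms(2) qpoch_Suc[of q "n - Suc i"] by (simp add: Suc_diff_Suc)
  show ?thesis
    unfolding pnk_def qbinom_pascal[OF assms] diff_Suc_Suc split
    by (simp add: algebra_simps power_mult_distrib)
qed

lemma sum_atMost_Suc_split:
  fixes f a b :: "nat \<Rightarrow> 'a::comm_monoid_add"
  assumes "f 0 = b 0" "\<And>i. i < n \<Longrightarrow> f (Suc i) = a i + b (Suc i)" "f (Suc n) = a n"
  shows "(\<Sum>k\<le>Suc n. f k) = (\<Sum>k\<le>n. a k) + (\<Sum>k\<le>n. b k)"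
proof -
  have "(\<Sum>k\<le>Suc n. f k) = b 0 + (\<Sum>i<n. a i + b (Suc i)) + a n"
    unfolding sum.atMost_shift sum.lessThan_Suc using assms by (simp add: add_ac)
  also have "\<dots> = (\<Sum>k<Suc n. a k) + (\<Sum>k<Suc n. b k)"
    unfolding sum.lessThan_Suc[of a] sum.lessThan_Suc_shift[of b] sum.distrib by (simp add: add_ac)
  finally show ?thesis by (simp only: lessThan_Suc_atMost)
qed

text \<open>A q-analogue of Newton's expansion in falling factorials. Both sides satisfy
  \<open>F (n + 1) z = x z F n z + (1 - z) F n (q z)\<close> and \<open>F 0 z = 1\<close>.\<close>
lemma sum_power_pnk_eq:
  assumes q: "q > 0"
  shows "(\<Sum>k\<le>n. x ^ k * pnk q n k z)
       = (\<Sum>r\<le>n. of_real (qbinom q n r) * (\<Prod>j<r. x - of_real (q ^ j)) * z ^ r)"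
proof (induction n arbitrary: z)
  case 0
  then show ?case using q by (simp add: pnk_def qpoch_def)
next
  case (Suc n)
  have "(\<Sum>k\<le>Suc n. x ^ k * pnk q (Suc n) k z)
      = (\<Sum>k\<le>n. x * z * (x ^ k * pnk q n k z)) + (\<Sum>k\<le>n. (1 - z) * (x ^ k * pnk q n k (of_real q * z)))"
  proof (rule sum_atMost_Suc_split)
    show "x ^ Suc i * pnk q (Suc n) (Suc i) z
        = x * z * (x ^ i * pnk q n i z) + (1 - z) * (x ^ Suc i * pnk q n (Suc i) (of_real q * z))"
      if "i < n" for i
      unfolding pnk_Suc_Suc[OF q that] by (simp add: algebra_simps)
  qed (use q in \<open>simp_all add: pnk_Suc_0 pnk_Suc_self\<close>)
  also have "\<dots> = (\<Sum>r\<le>n. of_real (qbinom q n r) * (\<Prod>j<Suc r. x - of_real (q ^ j)) * z ^ Suc r)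
      + (\<Sum>r\<le>n. of_real (q ^ r * qbinom q n r) * (\<Prod>j<r. x - of_real (q ^ j)) * z ^ r)"
    unfolding mult.assoc[of "x * z"] mult.assoc[of "1 - z"] sum_distrib_left[symmetric] Suc.IH
    unfolding sum_distrib_left sum.distrib[symmetric]
    by (intro sum.cong refl) (simp add: algebra_simps power_mult_distrib)
  also have "\<dots> = (\<Sum>r\<le>Suc n. of_real (qbinom q (Suc n) r) * (\<Prod>j<r. x - of_real (q ^ j)) * z ^ r)"
    using q by (intro sum_atMost_Suc_split[symmetric]) (simp_all add: qbinom_pascal algebra_simps)
  finally show ?case .
qed

lemma sum_qpower_pnk_polynomial:
  assumes q: "q > 0"
  shows "\<exists>P :: complex poly. degree P \<le> min s n \<and>
           (\<forall>z. (\<Sum>k\<le>n. of_real (q ^ s) ^ k * pnk q n k z) = poly P z)"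
proof -
  define d where "d r = of_real (qbinom q n r) * (\<Prod>j<r. of_real (q ^ s) - of_real (q ^ j) :: complex)"
    for r
  define P where "P = (\<Sum>r\<le>n. monom (d r) r)"
  have "d r = 0" if "r > s" for r
    unfolding d_def using that by (auto intro!: bexI[of _ s])
  then have "degree P \<le> min s n"
    unfolding P_def by (intro degree_le) (auto simp: coeff_sum sum.delta' not_le)
  moreover have "(\<Sum>k\<le>n. of_real (q ^ s) ^ k * pnk q n k z) = poly P z" for z
    unfolding sum_power_pnk_eq[OF q] P_def poly_sum poly_monom d_def by simp
  ultimately show ?thesis by blast
qed

lemma sum_qpowers_pnk_polynomial:
  assumes q: "q > 0"
  shows "\<exists>P :: complex poly. degree P \<le> min m n \<and>
           (\<forall>z. (\<Sum>s\<le>m. c s * (\<Sum>k\<le>n. of_real (q ^ s) ^ k * pnk q n k z)) = poly P z)"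
proof -
  have "\<forall>s. \<exists>P :: complex poly. degree P \<le> min s n \<and>
           (\<forall>z. (\<Sum>k\<le>n. of_real (q ^ s) ^ k * pnk q n k z) = poly P z)"
    using sum_qpower_pnk_polynomial[OF q] by blast
  then obtain P where P: "\<And>s. degree (P s) \<le> min s n"
      "\<And>s z. (\<Sum>k\<le>n. of_real (q ^ s) ^ k * pnk q n k z) = poly (P s) z"
    by (auto dest!: choice)
  have "degree (\<Sum>s\<le>m. smult (c s) (P s)) \<le> min m n"
  proof (intro degree_sum_le finite_atMost)
    fix s assume "s \<in> {..m}"
    then show "degree (smult (c s) (P s)) \<le> min m n"
      using P(1)[of s] degree_smult_le[of "c s" "P s"] by auto
  qed
  then show ?thesis
    unfolding P(2) by (intro exI[of _ "\<Sum>s\<le>m. smult (c s) (P s)"]) (simp add: poly_sum)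
qed

section \<open>The operator U on monomials\<close>

lemma qbinom_qbeta_ratio:
  assumes "p > 0" "K < N"
  shows "qint p N * qbinom p (N - 1) K * qfact p (K + m) * qfact p (N - 1 - K) / qfact p (N + m)
       = qrising p (Suc K) m / qrising p (Suc N) m"
proof -
  have "qint p N * qfact p (N - 1) = qfact p N"
    using assms(2) qfact_Suc[of p "N - 1"] by (simp add: mult.commute)
  then show ?thesis
    unfolding qbinom_def qfact_add
    using qfact_pos[OF assms(1), of N] qfact_pos[OF assms(1), of K] qfact_pos[OF assms(1), of "N - 1 - K"]
    by (simp add: field_simps)
qed

lemma qrising_ratio_inverse_base:
  assumes "q > 0"
  shows "(q ^ K / q ^ N) ^ m * (qrising (1 / q) (Suc K) m / qrising (1 / q) (Suc N) m)
       = qrising q (Suc K) m / qrising q (Suc N) m"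
  using assms unfolding qrising_inverse_base[OF less_imp_neq[OF assms, symmetric]]
  by (simp add: power_add power_mult power_divide)

lemma qbeta_coefficient_eq:
  assumes q: "q > 1" and "K < N"
  shows "qint (1 / q) N * q ^ K * (qbinom (1 / q) (N - 1) K * (1 / q) ^ K * (q ^ K / q ^ N) ^ m
           * qfact (1 / q) (K + m) * qfact (1 / q) (N - 1 - K) / qfact (1 / q) (K + m + (N - 1 - K) + 1))
       = qrising q (Suc K) m / qrising q (Suc N) m"
proof -
  define p where "p = 1 / q"
  have "p > 0" using q by (simp add: p_def)
  have "qint p N * q ^ K * (qbinom p (N - 1) K * p ^ K * (q ^ K / q ^ N) ^ m
          * qfact p (K + m) * qfact p (N - 1 - K) / qfact p (K + m + (N - 1 - K) + 1))
      = (q ^ K * p ^ K) * (q ^ K / q ^ N) ^ m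
        * (qint p N * qbinom p (N - 1) K * qfact p (K + m) * qfact p (N - 1 - K) / qfact p (N + m))"
    using \<open>K < N\<close> by (simp add: mult_ac add.commute[of m])
  also have "\<dots> = (q ^ K / q ^ N) ^ m * (qrising p (Suc K) m / qrising p (Suc N) m)"
    using q unfolding qbinom_qbeta_ratio[OF \<open>p > 0\<close> \<open>K < N\<close>] by (simp add: p_def power_one_over)
  also have "\<dots> = qrising q (Suc K) m / qrising q (Suc N) m"
    using q qrising_ratio_inverse_base[of q K N m] unfolding p_def by simp
  finally show ?thesis unfolding p_def .
qed

lemma Uop_emon_inner_term:
  assumes q: "q > 1" and k: "1 \<le> k" "k < n"
  shows "of_real (qint (1/q) (n-1)) * of_real (q^(k-1)) *
     qintegral (1/q) (\<lambda>t. pnk (1/q) (n-2) (k-1) (of_real (t/q)) * emon m (q powi (int k - int n) * t))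
   = of_real (qrising q k m / qrising q n m)"
proof -
  obtain K N where KN: "k = Suc K" "n = Suc N" "K < N"
    using k by (cases k; cases n) auto
  define p where "p = 1 / q"
  have p: "0 < p" "p < 1" using q by (auto simp: p_def)
  define c where "c = qbinom p (N - 1) K * p ^ K * (q ^ K / q ^ N) ^ m"
  have integrand: "pnk p (n - 2) (k - 1) (of_real (t / q)) * emon m (q powi (int k - int n) * t)
      = of_real (c * t ^ (K + m)) * qpoch p (N - 1 - K) (of_real (p * t))" for t
  proof -
    have args: "n - 2 = N - 1" "k - 1 = K" "t / q = p * t" "q powi (int k - int n) * t = q ^ K / q ^ N * t"
      using q KN by (simp_all add: p_def power_int_diff)
    have "qbinom p (N - 1) K * (p * t) ^ K * (q ^ K / q ^ N * t) ^ m = c * t ^ (K + m)"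
      by (simp add: c_def power_mult_distrib power_divide power_add mult_ac)
    moreover have "pnk p (N - 1) K (of_real (p * t)) * emon m (q ^ K / q ^ N * t)
        = of_real (qbinom p (N - 1) K * (p * t) ^ K * (q ^ K / q ^ N * t) ^ m)
          * qpoch p (N - 1 - K) (of_real (p * t))"
      unfolding pnk_def emon_def by (simp add: mult_ac)
    ultimately show ?thesis
      unfolding args by simp
  qed
  have real_eq: "qint p N * q ^ K
      * (c * qfact p (K + m) * qfact p (N - 1 - K) / qfact p (K + m + (N - 1 - K) + 1))
      = qrising q k m / qrising q n m"
    using qbeta_coefficient_eq[OF q KN(3), of m] unfolding KN p_def[symmetric] c_def .
  have "n - 1 = N" "k - 1 = K" using KN by simp_all
  then show ?thesis
    unfolding p_def[symmetric] integrand qintegral_power_qpoch[OF p]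
    by (simp only: of_real_mult[symmetric] real_eq)
qed

lemma Uop_emon_eq_sum_qrising:
  assumes q: "q > 1" and m: "m \<ge> 1" and n: "n \<ge> 1"
  shows "Uop q n (emon m) z = (\<Sum>k\<le>n. of_real (qrising q k m / qrising q n m) * pnk q n k z)"
proof -
  define I where "I k = qintegral (1/q)
      (\<lambda>t. pnk (1/q) (n-2) (k-1) (of_real (t/q)) * emon m (q powi (int k - int n) * t))" for k
  have "qrising q n m > 0"
    unfolding qrising_def using q n by (intro prod_pos) (auto intro: qint_pos)
  have "{..n} = insert 0 (insert n {1..n-1})" using n by auto
  then have "(\<Sum>k\<le>n. of_real (qrising q k m / qrising q n m) * pnk q n k z)
      = pnk q n n z + (\<Sum>k=1..n-1. of_real (qrising q k m / qrising q n m) * pnk q n k z)"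
    using n \<open>qrising q n m > 0\<close> qrising_0_left[OF m] by (simp add: sum.insert)
  also have "(\<Sum>k=1..n-1. of_real (qrising q k m / qrising q n m) * pnk q n k z)
      = of_real (qint (1/q) (n-1)) * (\<Sum>k=1..n-1. of_real (q^(k-1)) * pnk q n k z * I k)"
    unfolding sum_distrib_left
  proof (intro sum.cong refl)
    fix k assume "k \<in> {1..n-1}"
    then have "1 \<le> k" "k < n" by auto
    show "of_real (qrising q k m / qrising q n m) * pnk q n k z
        = of_real (qint (1/q) (n-1)) * (of_real (q^(k-1)) * pnk q n k z * I k)"
      unfolding Uop_emon_inner_term[OF q \<open>1 \<le> k\<close> \<open>k < n\<close>, of m, symmetric] I_def
      by (simp only: mult_ac)
  qed
  finally show ?thesis
    using m unfolding Uop_def I_def by (simp add: emon_def)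
qed

lemma Sq_0: "m \<ge> 1 \<Longrightarrow> Sq q m 0 = 0"
  unfolding Sq_def poly_0_coeff_0[symmetric] poly_prod by (rule prod_zero) (auto intro!: bexI[of _ 0])

lemma sum_Sq_Bq_e:
  assumes q: "q > 0" and m: "m \<ge> 1" and n: "n \<ge> 1"
  shows "(\<Sum>s=1..m. of_real (Sq q m s * qint q n ^ s) * Bq_e q n s z)
       = (\<Sum>k\<le>n. of_real (qrising q k m) * pnk q n k z)"
proof -
  have nz: "qint q n \<noteq> 0" using qint_pos[OF q n] by simp
  have "of_real (Sq q m s * qint q n ^ s) * Bq_e q n s z
      = (\<Sum>k\<le>n. of_real (Sq q m s * qint q k ^ s) * pnk q n k z)" for s
    unfolding Bq_e_def atMost_atLeast0 sum_distrib_left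
  proof (intro sum.cong refl)
    fix k
    have "Sq q m s * qint q n ^ s * (qint q k / qint q n) ^ s = Sq q m s * qint q k ^ s"
      using nz by (simp add: power_divide)
    then show "of_real (Sq q m s * qint q n ^ s) * (of_real ((qint q k / qint q n) ^ s) * pnk q n k z)
        = of_real (Sq q m s * qint q k ^ s) * pnk q n k z"
      by (simp only: mult.assoc[symmetric] of_real_mult[symmetric])
  qed
  moreover have "{..m} = insert 0 {1..m}" by auto
  ultimately have "(\<Sum>s=1..m. of_real (Sq q m s * qint q n ^ s) * Bq_e q n s z)
      = (\<Sum>s\<le>m. \<Sum>k\<le>n. of_real (Sq q m s * qint q k ^ s) * pnk q n k z)"
    by (simp add: Sq_0[OF m])
  also have "\<dots> = (\<Sum>k\<le>n. of_real (qrising q k m) * pnk q n k z)"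
    unfolding qrising_eq_sum_Sq by (subst sum.swap) (simp add: sum_distrib_right)
  finally show ?thesis .
qed

lemma Uop_emon_polynomial:
  assumes q: "q > 1" and m: "m \<ge> 1" and n: "n \<ge> 1"
  shows "\<exists>P :: complex poly. degree P \<le> min m n \<and> (\<forall>z. Uop q n (emon m) z = poly P z)"
proof -
  define c where "c s = (of_real (coeff (\<Prod>i<m. [: - 1 / (q - 1), q ^ i / (q - 1) :]) s
                                   / qrising q n m) :: complex)" for s
  have coefficient: "of_real (qrising q k m / qrising q n m) * pnk q n k z
      = (\<Sum>s\<le>m. c s * (of_real (q ^ s) ^ k * pnk q n k z))" for k z
    using q unfolding qrising_eq_sum_qpower[OF less_imp_neq[OF q, symmetric], of k] c_def
    by (simp add: sum_divide_distrib sum_distrib_left sum_distrib_right mult_ac)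
  have "Uop q n (emon m) z = (\<Sum>s\<le>m. c s * (\<Sum>k\<le>n. of_real (q ^ s) ^ k * pnk q n k z))" for z
    unfolding Uop_emon_eq_sum_qrising[OF assms] coefficient sum_distrib_left by (rule sum.swap)
  then show ?thesis
    using sum_qpowers_pnk_polynomial[where c = c and m = m and n = n] q by simp
qed

theorem mainTheorem5:
  fixes q :: real and m n :: nat
  assumes "q > 1" and "m \<ge> 1" and "n \<ge> 1"
  shows "(\<exists>P :: complex poly. degree P \<le> min m n \<and> (\<forall>z. Uop q n (emon m) z = poly P z))
     \<and> (\<forall>z. Uop q n (emon m) z =
           of_real (qfact q (n - 1) / qfact q (n + m - 1)) *
           (\<Sum>s=1..m. of_real (Sq q m s * qint q n ^ s) * Bq_e q n s z))"
proof (intro conjI allI)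
  show "\<exists>P :: complex poly. degree P \<le> min m n \<and> (\<forall>z. Uop q n (emon m) z = poly P z)"
    by (rule Uop_emon_polynomial[OF assms])
  fix z
  have "qfact q (n - 1) / qfact q (n + m - 1) = 1 / qrising q n m"
    using assms qfact_pos[of q "n - 1"] qfact_add[of q "n - 1" m] by (cases n) auto
  moreover have "(\<Sum>k\<le>n. of_real (qrising q k m / qrising q n m) * pnk q n k z)
      = of_real (1 / qrising q n m) * (\<Sum>k\<le>n. of_real (qrising q k m) * pnk q n k z)"
    unfolding sum_distrib_left by (intro sum.cong refl) simp
  ultimately show "Uop q n (emon m) z =
      of_real (qfact q (n - 1) / qfact q (n + m - 1)) *
      (\<Sum>s=1..m. of_real (Sq q m s * qint q n ^ s) * Bq_e q n s z)"
    using assms by (simp only: Uop_emon_eq_sum_qrising sum_Sq_Bq_e)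
qed

end
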